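(* Let $d,p\ge 1$ and consider the two-layer linear model $f_1(\mathbf{x})=\mathbf{W}_1\mathbf{x}$, $f_2(\mathbf{x})=\mathbf{W}_2\mathbf{W}_1\mathbf{x}$ with $\mathbf{W}_1\in\mathbb{R}^{p\times d}$, $\mathbf{W}_2\in\mathbb{R}^{p\times p}$. Let $(\mathbf{W}_1,\mathbf{W}_2)$ be a global minimizer of $\mathcal{L}_{CL}(f_2)$ which, among all global minimizers, has the smallest value of $\|\mathbf{W}_1^\top\mathbf{W}_1\|_F^2+\|\mathbf{W}_2^\top\mathbf{W}_2\|_F^2$. Then $\mathbf{W}_1\mathbf{W}_1^\top=\mathbf{W}_2^\top\mathbf{W}_2$.
   Context: Pretraining distribution $\mathcal{D}$: a random input $\mathbf{x}\in\mathbb{R}^d$ has independent coordinates, with $x_i$ uniform on $\{-\phi_i,\phi_i\}$, $\phi_i>0$. Augmentation $\mathcal{A}(\mathbf{x})$: for each coordinate $i$ independently, with probability $\alpha_i\in[0,1]$ the sign of $x_i$ is re-randomized (replaced by an independent uniform choice of $\pm\phi_i$), otherwise $x_i$ is kept, giving $\mathbf{x}'$; then independent noise $\boldsymbol{\xi}$ with $\mathbb{E}[\boldsymbol{\xi}]=0$, $\mathbb{E}[\boldsymbol{\xi}\boldsymbol{\xi}^\top]=\sigma^2\mathbf{I}$ is added, and the augmentation is $\mathbf{x}'+\boldsymbol{\xi}$. Different draws of $\mathcal{A}$ are independent. The spectral contrastive loss of a map $f$ is $\mathcal{L}_{CL}(f)=-2\,\mathbb{E}_{\mathbf{x}\sim\mathcal{D},\,\mathbf{x}_1^+,\mathbf{x}_2^+\sim\mathcal{A}(\mathbf{x})}[f(\mathbf{x}_1^+)^\top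 f(\mathbf{x}_2^+)]+\mathbb{E}_{\mathbf{x}_1,\mathbf{x}_2\sim\mathcal{D}\text{ i.i.d.}}[(f(\mathcal{A}(\mathbf{x}_1))^\top f(\mathcal{A}(\mathbf{x}_2)))^2]$, where $\mathbf{x}_1^+,\mathbf{x}_2^+$ are two independent augmentations of the same $\mathbf{x}$. *)

theory Defs
  imports "HOL-Probability.Probability"
begin

text \<open>Sign patterns on the coordinates are functions 'd => bool (True = +, False = -).
  A point of the pretraining distribution with sign pattern s is sgnvec phi s.\<close>

definition sgnvec :: "('d::finite \<Rightarrow> real) \<Rightarrow> ('d \<Rightarrow> bool) \<Rightarrow> real^'d" where
  "sgnvec \<phi> s = (\<chi> i. if s i then \<phi> i else - \<phi> i)"

definition unif_w :: "('d::finite \<Rightarrow> bool) \<Rightarrow> real" where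
  "unif_w s = (1/2) ^ CARD('d)"

text \<open>Discrete randomness of one augmentation: r i says whether coordinate i is
  re-randomized (probability alpha i), u is the fresh uniform sign pattern.\<close>
definition aug_w :: "('d::finite \<Rightarrow> real) \<Rightarrow> ('d \<Rightarrow> bool) \<times> ('d \<Rightarrow> bool) \<Rightarrow> real" where
  "aug_w \<alpha> ru = (\<Prod>i\<in>UNIV. if fst ru i then \<alpha> i else 1 - \<alpha> i) * unif_w (snd ru)"

definition aug_pt :: "('d::finite \<Rightarrow> real) \<Rightarrow> ('d \<Rightarrow> bool) \<Rightarrow> ('d \<Rightarrow> bool) \<times> ('d \<Rightarrow> bool) \<Rightarrow> real^'d" where
  "aug_pt \<phi> s ru = sgnvec \<phi> (\<lambda>i. if fst ru i then snd ru i else s i)"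

text \<open>Expectation of g(A(x1), A(x2)) for two independent augmentations A of the
  (fixed) points with sign patterns s1, s2; the noises are independent draws from N.\<close>
definition aug_exp2 ::
  "('d::finite \<Rightarrow> real) \<Rightarrow> ('d \<Rightarrow> real) \<Rightarrow> (real^'d) measure
     \<Rightarrow> (real^'d \<Rightarrow> real^'d \<Rightarrow> real) \<Rightarrow> ('d \<Rightarrow> bool) \<Rightarrow> ('d \<Rightarrow> bool) \<Rightarrow> real" where
  "aug_exp2 \<phi> \<alpha> N g s1 s2 =
     (\<Sum>ru1\<in>UNIV. \<Sum>ru2\<in>UNIV. aug_w \<alpha> ru1 * aug_w \<alpha> ru2 *
        (\<integral>z. g (aug_pt \<phi> s1 ru1 + fst z) (aug_pt \<phi> s2 ru2 + snd z) \<partial>(N \<Otimes>\<^sub>M N)))"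

definition cl_loss ::
  "('d::finite \<Rightarrow> real) \<Rightarrow> ('d \<Rightarrow> real) \<Rightarrow> (real^'d) measure \<Rightarrow> (real^'d \<Rightarrow> real^'p::finite) \<Rightarrow> real" where
  "cl_loss \<phi> \<alpha> N f =
     - 2 * (\<Sum>s\<in>UNIV. unif_w s * aug_exp2 \<phi> \<alpha> N (\<lambda>a b. f a \<bullet> f b) s s)
     + (\<Sum>s1\<in>UNIV. \<Sum>s2\<in>UNIV. unif_w s1 * unif_w s2 *
          aug_exp2 \<phi> \<alpha> N (\<lambda>a b. (f a \<bullet> f b)\<^sup>2) s1 s2)"

definition noise_dist :: "(real^'d::finite) measure \<Rightarrow> real \<Rightarrow> bool" where
  "noise_dist N \<sigma> \<longleftrightarrow> prob_space N \<and> sets N = sets borel \<and>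
     (\<forall>i. integrable N (\<lambda>\<xi>. (\<xi> $ i)\<^sup>2)) \<and>
     (\<forall>i. integrable N (\<lambda>\<xi>. \<xi> $ i) \<and> (\<integral>\<xi>. \<xi> $ i \<partial>N) = 0) \<and>
     (\<forall>i j. (\<integral>\<xi>. \<xi> $ i * \<xi> $ j \<partial>N) = (if i = j then \<sigma>\<^sup>2 else 0))"

end

theory Submission
  imports Defs
begin

(* The loss sees (W1, W2) only through the product W2 W1. Put P = W1 W1^T and Q = W2^T W2. Shearing the factorization by I + t E and I - t E with
   E E = 0 shows, to first order in t, that P P - Q Q is orthogonal to every square-zero matrix,
   hence a multiple of the identity; rescaling to (c W1, W2 / c) shows that it is traceless, so
   P P = Q Q. Gram matrices with equal squares are equal. *)

lemma matrix_add_rdistrib: "((A::'a::semiring_1^'n^'m) + B) ** C = A ** C + B ** C"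
  by (vector matrix_matrix_mult_def sum.distrib[symmetric] field_simps)

lemma matrix_diff_ldistrib: "(A::'a::ring_1^'n^'m) ** (B - C) = A ** B - A ** C"
  by (simp add: matrix_matrix_mult_def vec_eq_iff sum_subtractf algebra_simps)

lemma matrix_diff_rdistrib: "((A::'a::ring_1^'n^'m) - B) ** C = A ** C - B ** C"
  by (simp add: matrix_matrix_mult_def vec_eq_iff sum_subtractf algebra_simps)

lemma transpose_add: "transpose (A + B) = transpose A + transpose (B::'a::semiring_1^'n^'m)"
  by (simp add: transpose_def vec_eq_iff)

lemma transpose_diff: "transpose (A - B) = transpose A - transpose (B::'a::ring_1^'n^'m)"
  by (simp add: transpose_def vec_eq_iff)

lemma transpose_gram: "transpose (transpose A ** A) = transpose A ** (A::'a::comm_semiring_1^'n^'m)"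
  by (simp add: matrix_transpose_mul)

lemma inner_matrix_eq_trace: "(A::real^'n^'m) \<bullet> B = trace (transpose A ** B)"
  by (simp add: inner_vec_def trace_def matrix_matrix_mult_def transpose_def)
     (rule sum.swap)

lemma inner_matrix_mult_left: "(A::real^'k^'m) \<bullet> (B ** C) = (transpose B ** A) \<bullet> C"
  by (simp add: inner_matrix_eq_trace matrix_transpose_mul matrix_mul_assoc)

lemma inner_matrix_mult_right: "(A::real^'k^'m) \<bullet> (B ** C) = (A ** transpose C) \<bullet> B"
  by (simp add: inner_matrix_eq_trace matrix_transpose_mul matrix_mul_assoc)
     (metis matrix_mul_assoc trace_mul_sym)

lemma inner_transpose: "transpose A \<bullet> transpose B = (A::real^'n^'m) \<bullet> B"
  by (metis inner_commute inner_matrix_eq_trace trace_mul_sym transpose_transpose)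

lemma trace_square_symmetric:
  "transpose (S::real^'n^'n) = S \<Longrightarrow> trace (S ** S) = (norm S)\<^sup>2"
  by (metis inner_matrix_eq_trace power2_norm_eq_inner)

definition outer_prod :: "real^'n \<Rightarrow> real^'n \<Rightarrow> real^'n^'n" where
  "outer_prod u v = (\<chi> k l. u$k * v$l)"

lemma outer_prod_square_zero:
  assumes "v \<bullet> u = 0" shows "outer_prod u v ** outer_prod u v = 0"
proof -
  have "(\<Sum>m\<in>UNIV. u$k * v$m * (u$m * v$l)) = u$k * v$l * (v \<bullet> u)" for k l
    by (simp add: inner_vec_def sum_distrib_left mult_ac)
  then show ?thesis
    using assms by (simp add: outer_prod_def matrix_matrix_mult_def vec_eq_iff)
qed

lemma inner_outer_prod: "(R::real^'n^'n) \<bullet> outer_prod u v = u \<bullet> (R *v v)"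
  by (simp add: inner_vec_def outer_prod_def matrix_vector_mult_def sum_distrib_left mult_ac)

lemma orthogonal_square_zero_imp_zero:
  fixes R :: "real^'n^'n"
  assumes orth: "\<And>E. E ** E = 0 \<Longrightarrow> R \<bullet> E = 0" and traceless: "trace R = 0"
  shows "R = 0"
proof -
  have orth_outer: "u \<bullet> (R *v v) = 0" if "v \<bullet> u = 0" for u v
    using orth[OF outer_prod_square_zero[OF that]] by (simp add: inner_outer_prod)
  have off_diag: "R$i$j = 0" if "i \<noteq> j" for i j
  proof -
    have "axis j 1 \<bullet> axis i (1::real) = 0"
      using that by (simp add: inner_axis_axis)
    then show ?thesis
      using orth_outer by (fastforce simp: inner_axis' matrix_vector_mult_basis column_def)
  qed
  have diag: "R$i$i = R$j$j" for i j
  proof (cases "i = j")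
    case False
    have "(axis i 1 + axis j 1) \<bullet> (R *v (axis i 1 - axis j 1)) = 0"
      using False by (intro orth_outer) (simp add: inner_axis_axis algebra_simps)
    then show ?thesis
      using False off_diag[of i j] off_diag[of j i]
      by (simp add: inner_axis' algebra_simps matrix_vector_mult_basis column_def)
  qed simp
  fix i0 :: 'n
  have "trace R = (\<Sum>i\<in>(UNIV::'n set). R$i0$i0)"
    unfolding trace_def by (intro sum.cong refl diag)
  also have "\<dots> = real CARD('n) * R$i0$i0"
    by simp
  finally have "trace R = real CARD('n) * R$i0$i0" .
  with traceless have "R$i0$i0 = 0" by simp
  then show ?thesis
    using off_diag diag by (metis vec_eq_iff zero_index)
qed

lemma inner_antisymmetric_symmetric:
  assumes "transpose A = - A" and "transpose S = S"
  shows "(A::real^'n^'n) \<bullet> S = 0"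
proof -
  have "A \<bullet> S = transpose A \<bullet> transpose S" by (simp only: inner_transpose)
  also have "\<dots> = - (A \<bullet> S)" using assms by simp
  finally show ?thesis by simp
qed

lemma transpose_commutator_symmetric:
  assumes "transpose P = P" and "transpose Q = Q"
  shows "transpose (Q ** P - P ** Q) = - (Q ** P - P ** Q :: real^'n^'n)"
  using assms by (simp add: transpose_diff matrix_transpose_mul)

lemma symmetric_square_zero_imp_zero:
  assumes "transpose D = D" and "D ** D = 0"
  shows "D = (0::real^'n^'n)"
proof -
  have "D \<bullet> D = trace (D ** D)" by (metis assms(1) inner_matrix_eq_trace)
  with assms(2) show ?thesis by (simp add: trace_def)
qed

lemma gram_square_eq_imp_eq:
  fixes X :: "real^'n^'m" and Y :: "real^'n^'k"
  assumes sq: "(transpose X ** X) ** (transpose X ** X) = (transpose Y ** Y) ** (transpose Y ** Y)"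
  shows "transpose X ** X = transpose Y ** Y"
proof -
  define P where "P = transpose X ** X"
  define Q where "Q = transpose Y ** Y"
  define D where "D = P - Q"
  have P_sym: "transpose P = P" and Q_sym: "transpose Q = Q"
    unfolding P_def Q_def by (simp_all add: transpose_gram)
  have D_sym: "transpose D = D"
    unfolding D_def using P_sym Q_sym by (simp add: transpose_diff)
  have PD: "(P ** D) \<bullet> D = (X ** D) \<bullet> (X ** D)"
    unfolding P_def by (simp add: inner_matrix_mult_left matrix_mul_assoc)
  have QD: "(Q ** D) \<bullet> D = (Y ** D) \<bullet> (Y ** D)"
    unfolding Q_def by (simp add: inner_matrix_mult_left matrix_mul_assoc)
  \<comment> \<open>Since P P = Q Q, (P + Q) D is the commutator Q P - P Q, which is orthogonal to the symmetric D.\<close>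
  have "(P ** D) \<bullet> D + (Q ** D) \<bullet> D = ((P + Q) ** D) \<bullet> D"
    by (simp add: matrix_add_rdistrib inner_add_left)
  also have "(P + Q) ** D = Q ** P - P ** Q"
    using sq unfolding D_def P_def[symmetric] Q_def[symmetric]
    by (simp add: matrix_diff_ldistrib matrix_add_rdistrib)
  also have "(Q ** P - P ** Q) \<bullet> D = 0"
    by (intro inner_antisymmetric_symmetric transpose_commutator_symmetric P_sym Q_sym D_sym)
  finally have "(X ** D) \<bullet> (X ** D) + (Y ** D) \<bullet> (Y ** D) = 0"
    unfolding PD QD .
  then have "X ** D = 0" and "Y ** D = 0"
    by (simp_all add: add_nonneg_eq_0_iff)
  then have "D ** D = 0"
    by (simp add: D_def P_def Q_def matrix_diff_ldistrib matrix_diff_rdistrib flip: matrix_mul_assoc)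
  then have "D = 0"
    using D_sym by (rule symmetric_square_zero_imp_zero[rotated])
  then show ?thesis unfolding D_def P_def Q_def by simp
qed

lemma quartic_nonneg_imp_linear_coeff_zero:
  fixes a b c d :: real
  assumes "\<And>t. 0 \<le> a * t + b * t^2 + c * t^3 + d * t^4"
  shows "a = 0"
proof (rule DERIV_local_min)
  show "DERIV (\<lambda>t. a * t + b * t^2 + c * t^3 + d * t^4) 0 :> a"
    by (auto intro!: derivative_eq_intros)
  show "\<forall>y. \<bar>0 - y\<bar> < 1 \<longrightarrow> a * 0 + b * 0^2 + c * 0^3 + d * 0^4 \<le> a * y + b * y^2 + c * y^3 + d * y^4"
    using assms by simp
qed simp

lemma power2_norm_quadratic_curve:
  fixes X0 X1 X2 :: "'a::real_inner"
  shows "(norm (X0 + t *\<^sub>R X1 + t^2 *\<^sub>R X2))^2 = (norm X0)^2 + 2 * (X0 \<bullet> X1) * t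
    + (X1 \<bullet> X1 + 2 * (X0 \<bullet> X2)) * t^2 + 2 * (X1 \<bullet> X2) * t^3 + (X2 \<bullet> X2) * t^4"
  unfolding power2_norm_eq_inner
  by (simp add: inner_commute algebra_simps
      power2_eq_square power3_eq_cube power4_eq_xxxx)

definition factorization_cost :: "real^'d^'p \<Rightarrow> real^'p^'q \<Rightarrow> real" where
  "factorization_cost V1 V2 = (norm (transpose V1 ** V1))^2 + (norm (transpose V2 ** V2))^2"

definition min_cost_factorization :: "real^'d^'p \<Rightarrow> real^'p^'q \<Rightarrow> bool" where
  "min_cost_factorization W1 W2 \<longleftrightarrow>
     (\<forall>(V1::real^'d^'p) (V2::real^'p^'q). V2 ** V1 = W2 ** W1 \<longrightarrow> factorization_cost W1 W2 \<le> factorization_cost V1 V2)"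

lemma gram_shear_left:
  fixes W :: "real^'d^'p" and E :: "real^'p^'p"
  shows "transpose ((mat 1 + t *\<^sub>R E) ** W) ** ((mat 1 + t *\<^sub>R E) ** W)
    = transpose W ** W + t *\<^sub>R (transpose W ** (E + transpose E) ** W)
      + t^2 *\<^sub>R (transpose W ** transpose E ** E ** W)"
  by (simp add: matrix_transpose_mul transpose_add transpose_scalar matrix_add_rdistrib
      matrix_add_ldistrib matrix_scalar_ac matrix_mul_assoc algebra_simps power2_eq_square
      flip: scalar_matrix_assoc)

lemma gram_shear_right:
  fixes V :: "real^'p^'q" and E :: "real^'p^'p"
  shows "transpose (V ** (mat 1 - t *\<^sub>R E)) ** (V ** (mat 1 - t *\<^sub>R E))
    = transpose V ** V + t *\<^sub>R - (transpose E ** (transpose V ** V) + (transpose V ** V) ** E)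
      + t^2 *\<^sub>R (transpose E ** (transpose V ** V) ** E)"
  by (simp add: matrix_transpose_mul transpose_diff transpose_scalar matrix_diff_rdistrib
      matrix_diff_ldistrib matrix_add_rdistrib matrix_add_ldistrib matrix_scalar_ac
      matrix_mul_assoc algebra_simps power2_eq_square flip: scalar_matrix_assoc)

lemma inner_gram_congruence:
  fixes W :: "real^'d^'p" and F :: "real^'p^'p"
  shows "(transpose W ** W) \<bullet> (transpose W ** F ** W) = ((W ** transpose W) ** (W ** transpose W)) \<bullet> F"
proof -
  have "(transpose W ** W) \<bullet> ((transpose W ** F) ** W) = (transpose W ** W ** transpose W) \<bullet> (transpose W ** F)"
    by (simp only: inner_matrix_mult_right)
  also have "\<dots> = (W ** (transpose W ** W ** transpose W)) \<bullet> F"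
    by (simp add: inner_matrix_mult_left)
  finally show ?thesis by (simp add: matrix_mul_assoc)
qed

lemma inner_symmetric_transpose: "transpose S = S \<Longrightarrow> S \<bullet> transpose E = (S::real^'n^'n) \<bullet> E"
  by (metis inner_transpose)

lemma inner_symmetric_mult_add:
  assumes "transpose S = S"
  shows "S \<bullet> (transpose E ** S + S ** E) = 2 * ((S ** S) \<bullet> (E::real^'n^'n))"
proof -
  have "S \<bullet> (transpose E ** S) = (S ** S) \<bullet> transpose E"
    using assms by (simp add: inner_matrix_mult_right)
  moreover have "S \<bullet> (S ** E) = (S ** S) \<bullet> E"
    using assms by (simp add: inner_matrix_mult_left)
  ultimately show ?thesis
    using assms by (simp add: inner_add_right inner_symmetric_transpose matrix_transpose_mul)
qed

lemma min_cost_factorization_shear: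
  fixes W1 :: "real^'d^'p" and W2 :: "real^'p^'q" and E :: "real^'p^'p"
  assumes min: "min_cost_factorization W1 W2" and square_zero: "E ** E = 0"
  shows "((W1 ** transpose W1) ** (W1 ** transpose W1)
    - (transpose W2 ** W2) ** (transpose W2 ** W2)) \<bullet> E = 0"
proof -
  define X0 where "X0 = transpose W1 ** W1"
  define X1 where "X1 = transpose W1 ** (E + transpose E) ** W1"
  define X2 where "X2 = transpose W1 ** transpose E ** E ** W1"
  define Q where "Q = transpose W2 ** W2"
  define Y1 where "Y1 = - (transpose E ** Q + Q ** E)"
  define Y2 where "Y2 = transpose E ** Q ** E"
  \<comment> \<open>I - t E inverts I + t E because E E = 0, so the sheared pair still factorizes W2 W1
     and its cost is a quartic in t minimised at t = 0.\<close>
  have "0 \<le> 2 * (X0 \<bullet> X1 + Q \<bullet> Y1) * t + (X1 \<bullet> X1 + 2 * (X0 \<bullet> X2) + Y1 \<bullet> Y1 + 2 * (Q \<bullet> Y2)) * t^2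
    + 2 * (X1 \<bullet> X2 + Y1 \<bullet> Y2) * t^3 + (X2 \<bullet> X2 + Y2 \<bullet> Y2) * t^4" for t
  proof -
    have "(mat 1 - t *\<^sub>R E) ** (mat 1 + t *\<^sub>R E) = mat 1"
      using square_zero by (simp add: matrix_add_ldistrib matrix_diff_rdistrib matrix_scalar_ac
          flip: scalar_matrix_assoc)
    then have "(W2 ** (mat 1 - t *\<^sub>R E)) ** ((mat 1 + t *\<^sub>R E) ** W1) = W2 ** W1"
      by (metis matrix_mul_assoc matrix_mul_lid)
    with min have "factorization_cost W1 W2
        \<le> factorization_cost ((mat 1 + t *\<^sub>R E) ** W1) (W2 ** (mat 1 - t *\<^sub>R E))"
      unfolding min_cost_factorization_def by blast
    then show ?thesis
      unfolding factorization_cost_def gram_shear_left gram_shear_right power2_norm_quadratic_curve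
        X0_def[symmetric] X1_def[symmetric] X2_def[symmetric] Q_def[symmetric] Y1_def[symmetric]
        Y2_def[symmetric]
      by (simp add: algebra_simps)
  qed
  then have "2 * (X0 \<bullet> X1 + Q \<bullet> Y1) = 0"
    by (rule quartic_nonneg_imp_linear_coeff_zero)
  moreover have "X0 \<bullet> X1 = 2 * (((W1 ** transpose W1) ** (W1 ** transpose W1)) \<bullet> E)"
    unfolding X0_def X1_def inner_gram_congruence
    by (simp add: inner_add_right inner_symmetric_transpose matrix_transpose_mul matrix_mul_assoc)
  moreover have "Q \<bullet> Y1 = - 2 * ((Q ** Q) \<bullet> E)"
    unfolding Y1_def inner_minus_right
    by (simp add: inner_symmetric_mult_add Q_def transpose_gram)
  ultimately show ?thesis
    unfolding Q_def by (simp add: inner_diff_left)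
qed

lemma factorization_cost_rescale:
  assumes "c \<noteq> 0"
  shows "factorization_cost (c *\<^sub>R W1) (inverse c *\<^sub>R W2)
    = c^4 * (norm (transpose W1 ** W1))^2 + (norm (transpose W2 ** W2))^2 / c^4"
  using assms
  by (simp add: factorization_cost_def transpose_scalar matrix_scalar_ac
      power2_eq_square power4_eq_xxxx field_simps flip: scalar_matrix_assoc)

lemma min_cost_factorization_balanced:
  assumes min: "min_cost_factorization W1 W2"
  shows "(norm (transpose W1 ** W1))^2 = (norm (transpose W2 ** W2))^2"
proof -
  define a where "a = (norm (transpose W1 ** W1))^2"
  define b where "b = (norm (transpose W2 ** W2))^2"
  let ?f = "\<lambda>c::real. c^4 * a + b / c^4"
  have "DERIV ?f 1 :> 4 * a - 4 * b"
    by (rule derivative_eq_intros refl | simp)+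
  moreover have "\<forall>c. \<bar>1 - c\<bar> < 1 \<longrightarrow> ?f 1 \<le> ?f c"
  proof (intro allI impI)
    fix c :: real assume "\<bar>1 - c\<bar> < 1"
    then have "c \<noteq> 0" by auto
    then have "(inverse c *\<^sub>R W2) ** (c *\<^sub>R W1) = W2 ** W1"
      by (simp add: matrix_scalar_ac flip: scalar_matrix_assoc)
    with min have "factorization_cost W1 W2 \<le> factorization_cost (c *\<^sub>R W1) (inverse c *\<^sub>R W2)"
      unfolding min_cost_factorization_def by blast
    moreover have "factorization_cost W1 W2 = ?f 1"
      by (simp add: factorization_cost_def a_def b_def)
    ultimately show "?f 1 \<le> ?f c"
      using \<open>c \<noteq> 0\<close> by (simp add: factorization_cost_rescale a_def b_def)
  qed
  ultimately have "4 * a - 4 * b = 0"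
    by (rule DERIV_local_min[OF _ zero_less_one])
  then show ?thesis unfolding a_def b_def by simp
qed

lemma trace_gram_square:
  "trace ((W ** transpose W) ** (W ** transpose W)) = (norm (transpose W ** (W::real^'d^'p)))^2"
proof -
  have "trace ((W ** transpose W) ** (W ** transpose W)) = trace ((transpose W ** W) ** (transpose W ** W))"
    by (metis matrix_mul_assoc trace_mul_sym)
  then show ?thesis by (simp add: trace_square_symmetric transpose_gram)
qed

lemma min_cost_factorization_gram_squares_eq:
  assumes min: "min_cost_factorization W1 W2"
  shows "(W1 ** transpose W1) ** (W1 ** transpose W1) = (transpose W2 ** W2) ** (transpose W2 ** W2)"
proof -
  let ?R = "(W1 ** transpose W1) ** (W1 ** transpose W1) - (transpose W2 ** W2) ** (transpose W2 ** W2)"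
  have "?R = 0"
  proof (rule orthogonal_square_zero_imp_zero)
    show "?R \<bullet> E = 0" if "E ** E = 0" for E
      using min that by (rule min_cost_factorization_shear)
    show "trace ?R = 0"
      using min_cost_factorization_balanced[OF min]
      by (simp add: trace_sub trace_gram_square trace_square_symmetric transpose_gram)
  qed
  then show ?thesis by simp
qed

theorem theorem3p3:
  fixes \<phi> \<alpha> :: "'d::finite \<Rightarrow> real" and \<sigma> :: real
    and N :: "(real^'d) measure"
    and W1 :: "real^'d^'p::finite" and W2 :: "real^'p^'p"
  assumes phi_pos: "\<forall>i. \<phi> i > 0"
    and alpha_range: "\<forall>i. 0 \<le> \<alpha> i \<and> \<alpha> i \<le> 1"
    and noise: "noise_dist N \<sigma>"
    and global_min: "\<forall>V1 :: real^'d^'p. \<forall>V2 :: real^'p^'p.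
        cl_loss \<phi> \<alpha> N (\<lambda>x. (W2 ** W1) *v x) \<le> cl_loss \<phi> \<alpha> N (\<lambda>x. (V2 ** V1) *v x)"
    and min_norm: "\<forall>V1 :: real^'d^'p. \<forall>V2 :: real^'p^'p.
        (\<forall>U1 :: real^'d^'p. \<forall>U2 :: real^'p^'p.
            cl_loss \<phi> \<alpha> N (\<lambda>x. (V2 ** V1) *v x) \<le> cl_loss \<phi> \<alpha> N (\<lambda>x. (U2 ** U1) *v x))
        \<longrightarrow> (norm (transpose W1 ** W1))\<^sup>2 + (norm (transpose W2 ** W2))\<^sup>2
            \<le> (norm (transpose V1 ** V1))\<^sup>2 + (norm (transpose V2 ** V2))\<^sup>2"
  shows "W1 ** transpose W1 = transpose W2 ** W2"
proof -
  have "min_cost_factorization W1 W2"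
    unfolding min_cost_factorization_def factorization_cost_def
  proof (intro allI impI)
    fix V1 :: "real^'d^'p" and V2 :: "real^'p^'p"
    assume "V2 ** V1 = W2 ** W1"
    then show "(norm (transpose W1 ** W1))\<^sup>2 + (norm (transpose W2 ** W2))\<^sup>2
        \<le> (norm (transpose V1 ** V1))\<^sup>2 + (norm (transpose V2 ** V2))\<^sup>2"
      using global_min min_norm by simp
  qed
  then have "(transpose (transpose W1) ** transpose W1) ** (transpose (transpose W1) ** transpose W1)
      = (transpose W2 ** W2) ** (transpose W2 ** W2)"
    by (simp add: min_cost_factorization_gram_squares_eq)
  then show ?thesis
    using gram_square_eq_imp_eq by fastforce
qed

end
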